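(* Let $(G,Y)$ be a finite $C$-group. Then the commutator subgroup $[G,G]$ is finite. Moreover, each $g\in[G,G]$ can be written in the form $g=c^{-1}\prod_{i=1}^m y_{i,1}^{k_ip_i}y_{i,1}^{a_{i,1}}y_{i,2}^{a_{i,2}}\cdots y_{i,n_i}^{a_{i,n_i}}$, where $c$ is the canonical element of $G$ and the integers $k_i,a_{i,j}$ satisfy $\sum_{j=1}^{n_i}a_{i,j}+k_ip_i=n_ip_i$, $0<a_{i,j}\le p_i$ and $0\le k_i<n_i$.
   Context: A finite $C$-group is a pair $(G,Y)$ with $Y$ a finite conjugation-invariant subset of the group $G$, $1\notin Y$, such that $G$ has a presentation with generators the elements of $Y$ and defining relations all of the form $z^{-1}yz=y'$ ($y,y',z\in Y$). Write $Y=C_1\sqcup\dots\sqcup C_m$ for the decomposition into conjugacy classes of $G$, with enumerations $C_i=\{y_{i,1},\dots,y_{i,n_i}\}$; $p_i$ is the least $p\ge1$ such that $y^p$ is central in $G$ for $y\in C_i$ (independent of $y\in C_i$). The canonical element of $G$ is $c=\prod_{i=1}^m\prod_{j=1}^{n_i}y_{i,j}^{p_i}$. *)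

theory Defs
  imports "HOL-Algebra.Algebra"
begin

definition gprod :: "('a, 'b) monoid_scheme \<Rightarrow> 'a list \<Rightarrow> 'a" where
  "gprod G xs = foldr (\<lambda>x acc. x \<otimes>\<^bsub>G\<^esub> acc) xs \<one>\<^bsub>G\<^esub>"

definition letter_val :: "('a, 'b) monoid_scheme \<Rightarrow> 'a \<times> bool \<Rightarrow> 'a" where
  "letter_val G l = (if snd l then fst l else inv\<^bsub>G\<^esub> (fst l))"

definition word_eval :: "('a, 'b) monoid_scheme \<Rightarrow> ('a \<times> bool) list \<Rightarrow> 'a" where
  "word_eval G w = gprod G (map (letter_val G) w)"

text \<open>The congruence on words generated by free cancellation and the
  relations z^-1 y z = y' for (y, z, y') in R: two words are congruent iff
  they represent the same element of the group presented by generators Y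
  and relations R.\<close>
inductive word_congr :: "'a set \<Rightarrow> ('a \<times> 'a \<times> 'a) set \<Rightarrow> ('a \<times> bool) list \<Rightarrow> ('a \<times> bool) list \<Rightarrow> bool"
  for Y R where
  wc_refl: "word_congr Y R u u"
| wc_sym: "word_congr Y R u v \<Longrightarrow> word_congr Y R v u"
| wc_trans: "word_congr Y R u v \<Longrightarrow> word_congr Y R v w \<Longrightarrow> word_congr Y R u w"
| wc_cancel: "y \<in> Y \<Longrightarrow> word_congr Y R (u @ [(y, b), (y, \<not> b)] @ v) (u @ v)"
| wc_rel: "(y, z, y') \<in> R \<Longrightarrow>
    word_congr Y R (u @ [(z, False), (y, True), (z, True)] @ v) (u @ [(y', True)] @ v)"

text \<open>(G, Y) is a finite C-group: G is a group, Y a finite conjugation-invariant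
  subset not containing 1, and G has a presentation with generators the elements
  of Y (mapped identically) and defining relations R, all of the form
  z^-1 y z = y' with y, z, y' in Y.\<close>
definition finite_C_group :: "('a, 'b) monoid_scheme \<Rightarrow> 'a set \<Rightarrow> bool" where
  "finite_C_group G Y \<longleftrightarrow>
     group G \<and> finite Y \<and> Y \<subseteq> carrier G \<and> \<one>\<^bsub>G\<^esub> \<notin> Y \<and>
     (\<forall>g \<in> carrier G. \<forall>y \<in> Y. inv\<^bsub>G\<^esub> g \<otimes>\<^bsub>G\<^esub> y \<otimes>\<^bsub>G\<^esub> g \<in> Y) \<and>
     (\<exists>R \<subseteq> Y \<times> Y \<times> Y.
        (\<forall>g \<in> carrier G. \<exists>w. fst ` set w \<subseteq> Y \<and> word_eval G w = g) \<and>
        (\<forall>u v. fst ` set u \<subseteq> Y \<longrightarrow> fst ` set v \<subseteq> Y \<longrightarrow>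
           (word_eval G u = word_eval G v \<longleftrightarrow> word_congr Y R u v)))"

definition conj_class :: "('a, 'b) monoid_scheme \<Rightarrow> 'a \<Rightarrow> 'a set" where
  "conj_class G y = {inv\<^bsub>G\<^esub> g \<otimes>\<^bsub>G\<^esub> y \<otimes>\<^bsub>G\<^esub> g | g. g \<in> carrier G}"

definition central :: "('a, 'b) monoid_scheme \<Rightarrow> 'a \<Rightarrow> bool" where
  "central G x \<longleftrightarrow> x \<in> carrier G \<and> (\<forall>g \<in> carrier G. g \<otimes>\<^bsub>G\<^esub> x = x \<otimes>\<^bsub>G\<^esub> g)"

definition cperiod :: "('a, 'b) monoid_scheme \<Rightarrow> 'a \<Rightarrow> nat" where
  "cperiod G y = (LEAST p. p \<ge> 1 \<and> central G (y [^]\<^bsub>G\<^esub> p))"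

definition class_enumeration :: "('a, 'b) monoid_scheme \<Rightarrow> 'a set \<Rightarrow> 'a list list \<Rightarrow> bool" where
  "class_enumeration G Y ys \<longleftrightarrow>
     (\<forall>i < length ys. ys ! i \<noteq> [] \<and> distinct (ys ! i) \<and>
        set (ys ! i) = conj_class G (hd (ys ! i))) \<and>
     (\<forall>i < length ys. \<forall>j < length ys. i \<noteq> j \<longrightarrow> set (ys ! i) \<inter> set (ys ! j) = {}) \<and>
     Y = (\<Union>i < length ys. set (ys ! i))"

definition canonical_element :: "('a, 'b) monoid_scheme \<Rightarrow> 'a list list \<Rightarrow> 'a" where
  "canonical_element G ys =
     gprod G (map (\<lambda>cl. gprod G (map (\<lambda>y. y [^]\<^bsub>G\<^esub> cperiod G (hd cl)) cl)) ys)"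

end

theory Submission
  imports Defs
begin

(* For each conjugacy class C_i the signed number of letters from C_i in a word is invariant under
   the defining relations z^-1 y z = y', because y and y' are conjugate; so these class degrees
   vanish on [G,G].  Each y in C_i has y^p_i = z_i central, hence y^-1 = y^(p_i - 1) z_i^-1, and
   every word equals a positive word times a product of powers of the z_i.  Positive words are
   sorted along the enumeration using x y = y (y^-1 x y), which keeps the class counts, and then
   exponents are reduced into [1, p_i], moving powers of z_i into the central part.  Vanishing
   class degrees pin down the remaining power of z_i as k_i - n_i with 0 <= k_i < n_i, so [G,G]
   is the image of finitely many exponent tuples. *)

section \<open>Products and central elements\<close>

definition centralizer :: "('a, 'b) monoid_scheme \<Rightarrow> 'a \<Rightarrow> 'a set" where
  "centralizer G x = {g \<in> carrier G. x \<otimes>\<^bsub>G\<^esub> g = g \<otimes>\<^bsub>G\<^esub> x}"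

context monoid
begin

lemma gprod_Nil [simp]: "gprod G [] = \<one>"
  by (simp add: gprod_def)

lemma gprod_Cons [simp]: "gprod G (x # xs) = x \<otimes> gprod G xs"
  by (simp add: gprod_def)

lemma gprod_closed [intro, simp]: "set xs \<subseteq> carrier G \<Longrightarrow> gprod G xs \<in> carrier G"
  by (induct xs) auto

lemma gprod_append:
  "set xs \<subseteq> carrier G \<Longrightarrow> set ys \<subseteq> carrier G \<Longrightarrow>
   gprod G (xs @ ys) = gprod G xs \<otimes> gprod G ys"
  by (induct xs) (auto simp: m_assoc)

lemma gprod_concat:
  "set (concat xss) \<subseteq> carrier G \<Longrightarrow> gprod G (concat xss) = gprod G (map (gprod G) xss)"
  by (induct xss) (auto simp: gprod_append)

lemma gprod_replicate: "x \<in> carrier G \<Longrightarrow> gprod G (replicate k x) = x [^] k"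
  by (induct k) (simp_all add: nat_pow_Suc2[symmetric])

end

context group
begin

lemma mult_inv_cancel_left [simp]: "x \<in> carrier G \<Longrightarrow> y \<in> carrier G \<Longrightarrow> x \<otimes> (inv x \<otimes> y) = y"
  by (simp add: m_assoc[symmetric])

lemma inv_mult_cancel_left [simp]: "x \<in> carrier G \<Longrightarrow> y \<in> carrier G \<Longrightarrow> inv x \<otimes> (x \<otimes> y) = y"
  by (simp add: m_assoc[symmetric])

lemma subgroup_centralizer: "x \<in> carrier G \<Longrightarrow> subgroup (centralizer G x) G"
proof (rule subgroupI)
  assume x: "x \<in> carrier G"
  show "centralizer G x \<subseteq> carrier G" "centralizer G x \<noteq> {}"
    using x by (auto simp: centralizer_def)
  fix a b assume "a \<in> centralizer G x" "b \<in> centralizer G x"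
  then have a: "a \<in> carrier G" "x \<otimes> a = a \<otimes> x" and b: "b \<in> carrier G" "x \<otimes> b = b \<otimes> x"
    unfolding centralizer_def by blast+
  have "x \<otimes> inv a = inv a \<otimes> (a \<otimes> x) \<otimes> inv a"
    using a(1) x by (simp add: m_assoc)
  also have "\<dots> = inv a \<otimes> x"
    using a(1) x by (simp add: m_assoc flip: a(2))
  finally show "inv a \<in> centralizer G x" using a(1) unfolding centralizer_def by blast
  have "x \<otimes> (a \<otimes> b) = a \<otimes> x \<otimes> b" using a(1) b(1) x by (simp add: a(2) flip: m_assoc)
  also have "\<dots> = a \<otimes> b \<otimes> x" using a(1) b(1) x by (simp add: b(2) m_assoc)
  finally show "a \<otimes> b \<in> centralizer G x" using a(1) b(1) unfolding centralizer_def by blast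
qed

lemma subgroup_central: "subgroup {x. central G x} G"
proof -
  have "{x. central G x} = \<Inter> (centralizer G ` carrier G)"
  proof (intro equalityI subsetI)
    fix x assume "x \<in> {x. central G x}"
    then show "x \<in> \<Inter> (centralizer G ` carrier G)" unfolding central_def centralizer_def by blast
  next
    fix x assume x: "x \<in> \<Inter> (centralizer G ` carrier G)"
    then have "x \<in> carrier G" using one_closed unfolding centralizer_def by blast
    with x show "x \<in> {x. central G x}" unfolding central_def centralizer_def by blast
  qed
  moreover have "subgroup (\<Inter> (centralizer G ` carrier G)) G"
    by (rule subgroups_Inter) (auto intro: subgroup_centralizer)
  ultimately show ?thesis by simp
qed

lemma central_carrier: "central G a \<Longrightarrow> a \<in> carrier G"
  by (simp add: central_def)

lemma central_comm: "central G a \<Longrightarrow> g \<in> carrier G \<Longrightarrow> g \<otimes> a = a \<otimes> g"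
  by (simp add: central_def)

lemma central_one: "central G \<one>"
  using subgroup.one_closed[OF subgroup_central] by simp

lemma central_mult: "central G a \<Longrightarrow> central G b \<Longrightarrow> central G (a \<otimes> b)"
  using subgroup.m_closed[OF subgroup_central] by blast

lemma central_inv: "central G a \<Longrightarrow> central G (inv a)"
  using subgroup.m_inv_closed[OF subgroup_central] by blast

lemma central_int_pow: "central G a \<Longrightarrow> central G (a [^] (k::int))"
  using subgroup_int_pow_closed[OF subgroup_central] by blast

lemma central_gprod: "(\<And>x. x \<in> set xs \<Longrightarrow> central G x) \<Longrightarrow> central G (gprod G xs)"
  by (induct xs) (auto simp: central_one central_mult)

lemma gprod_map_mult_central:
  assumes "\<And>i. i \<in> set L \<Longrightarrow> a i \<in> carrier G" "\<And>i. i \<in> set L \<Longrightarrow> central G (b i)"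
  shows "gprod G (map (\<lambda>i. a i \<otimes> b i) L) = gprod G (map a L) \<otimes> gprod G (map b L)"
  using assms
proof (induct L)
  case (Cons x L)
  have "gprod G (map b L) \<in> carrier G" "b x \<in> carrier G"
    using Cons.prems by (auto intro!: central_carrier central_gprod)
  moreover have "gprod G (map a L) \<in> carrier G" "a x \<in> carrier G"
    using Cons.prems by (auto intro!: gprod_closed)
  moreover have "b x \<otimes> gprod G (map a L) = gprod G (map a L) \<otimes> b x"
    using Cons.prems by (intro central_comm[symmetric]) (auto intro!: gprod_closed)
  ultimately show ?case
    using Cons by (simp add: m_assoc) (simp flip: m_assoc)
qed simp

lemma gprod_map_update_central:
  assumes "distinct L" "i \<in> set L" "central G c" "\<And>j. j \<in> set L \<Longrightarrow> f j \<in> carrier G"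
  shows "gprod G (map (f(i := c \<otimes> f i)) L) = c \<otimes> gprod G (map f L)"
  using assms
proof (induct L)
  case (Cons x L)
  have c: "c \<in> carrier G" using Cons.prems(3) by (rule central_carrier)
  have rest: "gprod G (map f L) \<in> carrier G" using Cons.prems(4) by (auto intro!: gprod_closed)
  show ?case
  proof (cases "x = i")
    case True
    with Cons.prems(1) have "map (f(i := c \<otimes> f i)) L = map f L" by auto
    with True c rest Cons.prems(4) show ?thesis
      by (simp only: list.map gprod_Cons fun_upd_same) (simp add: m_assoc)
  next
    case False
    have IH: "gprod G (map (f(i := c \<otimes> f i)) L) = c \<otimes> gprod G (map f L)"
      using Cons.prems False by (intro Cons.hyps) auto
    have fx: "f x \<in> carrier G" using Cons.prems(4) by simp
    have comm: "f x \<otimes> c = c \<otimes> f x" using central_comm[OF Cons.prems(3) fx] .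
    have "gprod G (map (f(i := c \<otimes> f i)) (x # L)) = f x \<otimes> (c \<otimes> gprod G (map f L))"
      by (simp only: list.map gprod_Cons fun_upd_other[OF False] IH)
    also have "\<dots> = c \<otimes> gprod G (map f (x # L))"
      using c fx rest by (simp add: comm m_assoc[symmetric])
    finally show ?thesis .
  qed
qed simp

lemma conj_nat_pow:
  "g \<in> carrier G \<Longrightarrow> h \<in> carrier G \<Longrightarrow> (inv g \<otimes> h \<otimes> g) [^] (k::nat) = inv g \<otimes> h [^] k \<otimes> g"
  by (induct k) (simp_all add: m_assoc)

lemma gprod_map_int_pow:
  "x \<in> carrier G \<Longrightarrow> gprod G (map (\<lambda>j. x [^] (q j :: int)) L) = x [^] (\<Sum>j\<leftarrow>L. q j)"
  by (induct L) (auto simp: int_pow_mult)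

lemma int_pow_reduce:
  assumes x: "x \<in> carrier G" and p: "0 < p"
  shows "x [^] (c::int) = x [^] ((c - 1) mod p + 1) \<otimes> (x [^] p) [^] ((c - 1) div p)"
proof -
  have c: "((c - 1) mod p + 1) + p * ((c - 1) div p) = c"
    by (metis add.commute add.left_commute diff_add_cancel mult_div_mod_eq)
  have "x [^] c = x [^] (((c - 1) mod p + 1) + p * ((c - 1) div p))"
    by (simp only: c)
  also have "\<dots> = x [^] ((c - 1) mod p + 1) \<otimes> x [^] (p * ((c - 1) div p))"
    by (rule int_pow_mult[OF x])
  also have "x [^] (p * ((c - 1) div p)) = (x [^] p) [^] ((c - 1) div p)"
    by (rule int_pow_pow[OF x, symmetric])
  finally show ?thesis .
qed

end

section \<open>Words in the generators\<close>

definition word_inv :: "('a \<times> bool) list \<Rightarrow> ('a \<times> bool) list" where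
  "word_inv w = rev (map (\<lambda>(y, b). (y, \<not> b)) w)"

lemma fst_set_word_inv [simp]: "fst ` set (word_inv w) = fst ` set w"
  by (force simp: word_inv_def)

lemma word_inv_Cons: "word_inv (l # w) = word_inv w @ [(fst l, \<not> snd l)]"
  by (simp add: word_inv_def case_prod_beta)

context group
begin

lemma letter_val_closed: "fst l \<in> carrier G \<Longrightarrow> letter_val G l \<in> carrier G"
  by (simp add: letter_val_def)

lemma word_eval_Nil [simp]: "word_eval G [] = \<one>"
  by (simp add: word_eval_def)

lemma word_eval_Cons [simp]: "word_eval G (l # w) = letter_val G l \<otimes> word_eval G w"
  by (simp add: word_eval_def)

lemma word_eval_closed: "fst ` set w \<subseteq> carrier G \<Longrightarrow> word_eval G w \<in> carrier G"
  unfolding word_eval_def by (auto simp: image_subset_iff intro!: gprod_closed letter_val_closed)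

lemma word_eval_append:
  "fst ` set u \<subseteq> carrier G \<Longrightarrow> fst ` set v \<subseteq> carrier G \<Longrightarrow>
   word_eval G (u @ v) = word_eval G u \<otimes> word_eval G v"
  unfolding word_eval_def by (auto simp: image_subset_iff intro!: gprod_append letter_val_closed)

lemma word_eval_word_inv:
  "fst ` set w \<subseteq> carrier G \<Longrightarrow> word_eval G (word_inv w) = inv (word_eval G w)"
proof (induct w)
  case (Cons l w)
  then have l: "fst l \<in> carrier G" and w: "fst ` set w \<subseteq> carrier G" by auto
  have "word_eval G (word_inv (l # w)) = inv (word_eval G w) \<otimes> inv (letter_val G l)"
    using Cons l w by (auto simp: word_inv_Cons word_eval_append letter_val_def)
  also have "\<dots> = inv (word_eval G (l # w))"
    using l w by (simp add: inv_mult_group letter_val_closed word_eval_closed)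
  finally show ?case .
qed (simp add: word_inv_def)

lemma word_eval_in_subgroup: "subgroup H G \<Longrightarrow> fst ` set w \<subseteq> H \<Longrightarrow> word_eval G w \<in> H"
  by (induct w)
    (auto simp: letter_val_def subgroup.one_closed subgroup.m_closed subgroup.m_inv_closed)

end

definition word_degree :: "'a set \<Rightarrow> ('a \<times> bool) list \<Rightarrow> int" where
  "word_degree A w = (\<Sum>l\<leftarrow>w. if fst l \<in> A then (if snd l then 1 else -1) else 0)"

lemma word_degree_Nil [simp]: "word_degree A [] = 0"
  by (simp add: word_degree_def)

lemma word_degree_Cons [simp]:
  "word_degree A (l # w) = (if fst l \<in> A then (if snd l then 1 else -1) else 0) + word_degree A w"
  by (simp add: word_degree_def)

lemma word_degree_append [simp]: "word_degree A (u @ v) = word_degree A u + word_degree A v"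
  by (simp add: word_degree_def)

lemma word_degree_word_inv [simp]: "word_degree A (word_inv w) = - word_degree A w"
  by (induct w) (auto simp: word_inv_Cons word_inv_def)

section \<open>Lists sorted by a rank\<close>

definition count_in :: "'a set \<Rightarrow> 'a list \<Rightarrow> nat" where
  "count_in A xs = length (filter (\<lambda>x. x \<in> A) xs)"

lemma count_in_Nil [simp]: "count_in A [] = 0"
  by (simp add: count_in_def)

lemma count_in_Cons [simp]: "count_in A (x # xs) = (if x \<in> A then 1 else 0) + count_in A xs"
  by (simp add: count_in_def)

lemma count_in_append [simp]: "count_in A (xs @ ys) = count_in A xs + count_in A ys"
  by (simp add: count_in_def)

lemma count_in_replicate [simp]: "count_in A (replicate k x) = (if x \<in> A then k else 0)"
  by (simp add: count_in_def filter_replicate)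

lemma count_in_eq_sum_count_list: "finite A \<Longrightarrow> count_in A xs = (\<Sum>x\<in>A. count_list xs x)"
proof (induct xs)
  case (Cons a xs)
  have "(\<Sum>x\<in>A. count_list (a # xs) x) = (\<Sum>x\<in>A. count_list xs x) + (\<Sum>x\<in>A. if a = x then 1 else 0)"
    unfolding sum.distrib[symmetric] by (intro sum.cong) auto
  with Cons show ?case by simp
qed (simp add: count_in_def)

lemma sorted_concat_replicate:
  "sorted (map r xs) \<Longrightarrow> sorted (map r (concat (map (\<lambda>x. replicate (c x) x) xs)))"
  by (induct xs) (auto simp: sorted_append)

lemma count_list_concat_replicate:
  "distinct xs \<Longrightarrow>
   count_list (concat (map (\<lambda>x. replicate (c x) x) xs)) y = (if y \<in> set xs then c y else 0)"
  by (induct xs) (auto simp: count_list_eq_length_filter filter_replicate)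

lemma sorted_eq_concat_replicate:
  assumes xs: "distinct xs" "inj_on r (set xs)" "sorted (map r xs)"
    and P: "set P \<subseteq> set xs" "sorted (map r P)"
  shows "P = concat (map (\<lambda>x. replicate (count_list P x) x) xs)"
proof -
  let ?Q = "concat (map (\<lambda>x. replicate (count_list P x) x) xs)"
  have "count_list ?Q y = count_list P y" for y
    using P(1) count_list_concat_replicate[OF xs(1)] by (auto simp: count_list_0_iff)
  then have "mset ?Q = mset P" by (simp add: multiset_eq_iff count_mset)
  then have "mset (map r ?Q) = mset (map r P)" by simp
  then have "map r P = map r ?Q"
    using properties_for_sort sorted_concat_replicate[OF xs(3)] P(2) sorted_sort_id by metis
  moreover have "set ?Q \<union> set P \<subseteq> set xs" using P(1) by auto
  ultimately show ?thesis using xs(2) by (metis inj_on_map_eq_map inj_on_subset)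
qed

lemma map_conv_upt_nth: "map f xs = map (\<lambda>i. f (xs ! i)) [0..<length xs]"
  by (rule nth_equalityI) auto

section \<open>Finite C-groups\<close>

lemma exponent_bounds:
  fixes a :: "nat \<Rightarrow> nat" and L p :: nat and E :: int
  assumes L: "0 < L" and a: "\<forall>j<L. 0 < a j \<and> a j \<le> p"
    and balance: "int (\<Sum>j<L. a j) + int p * E = 0"
  shows "\<exists>k<L. (\<Sum>j<L. a j) + k * p = L * p \<and> int k = int L + E"
proof -
  define S where "S = (\<Sum>j<L. a j)"
  have p: "0 < p" using a L by fastforce
  have S_eq: "int p * (- E) = int S" using balance by (simp add: S_def)
  have "L \<le> S" using sum_mono[of "{..<L}" "\<lambda>_. 1" a] a by (simp add: S_def Suc_le_eq)
  with L S_eq have "int p * (- E) \<ge> 1" by simp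
  then have E_upper: "E \<le> -1" using p by (smt (verit) mult_nonneg_nonpos of_nat_0_le_iff)
  have "S \<le> L * p" using sum_mono[of "{..<L}" a "\<lambda>_. p"] a by (simp add: S_def)
  with S_eq have "int p * (- E) \<le> int p * int L" by (simp add: mult.commute flip: of_nat_mult)
  then have E_lower: "- int L \<le> E"
    using p by (smt (verit) mult_le_cancel_left_pos of_nat_0_less_iff)
  show ?thesis
  proof (intro exI conjI)
    show "nat (int L + E) < L" "int (nat (int L + E)) = int L + E" using E_upper E_lower by auto
    have "int ((\<Sum>j<L. a j) + nat (int L + E) * p) = int (L * p)"
      using balance E_lower by (simp add: algebra_simps)
    then show "(\<Sum>j<L. a j) + nat (int L + E) * p = L * p" by (simp only: of_nat_eq_iff)
  qed
qed

locale C_group_presentation = group G for G :: "('a, 'b) monoid_scheme" (structure) +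
  fixes Y :: "'a set" and R :: "('a \<times> 'a \<times> 'a) set" and ys :: "'a list list"
  assumes finite_Y: "finite Y"
    and Y_carrier: "Y \<subseteq> carrier G"
    and conj_in_Y: "\<And>g y. g \<in> carrier G \<Longrightarrow> y \<in> Y \<Longrightarrow> inv g \<otimes> y \<otimes> g \<in> Y"
    and relations_in_Y: "R \<subseteq> Y \<times> Y \<times> Y"
    and generated_by_Y: "\<And>g. g \<in> carrier G \<Longrightarrow> \<exists>w. fst ` set w \<subseteq> Y \<and> word_eval G w = g"
    and presentation: "\<And>u v. fst ` set u \<subseteq> Y \<Longrightarrow> fst ` set v \<subseteq> Y \<Longrightarrow>
        word_eval G u = word_eval G v \<longleftrightarrow> word_congr Y R u v"
    and class_enumeration: "class_enumeration G Y ys"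

lemma finite_C_group_presentation:
  assumes "finite_C_group G Y" "class_enumeration G Y ys"
  obtains R where "C_group_presentation G Y R ys"
proof -
  have G: "group G" "finite Y" "Y \<subseteq> carrier G"
    and conj: "\<forall>g \<in> carrier G. \<forall>y \<in> Y. inv\<^bsub>G\<^esub> g \<otimes>\<^bsub>G\<^esub> y \<otimes>\<^bsub>G\<^esub> g \<in> Y"
    using assms(1) unfolding finite_C_group_def by blast+
  obtain R where R: "R \<subseteq> Y \<times> Y \<times> Y"
    "\<forall>g \<in> carrier G. \<exists>w. fst ` set w \<subseteq> Y \<and> word_eval G w = g"
    "\<forall>u v. fst ` set u \<subseteq> Y \<longrightarrow> fst ` set v \<subseteq> Y \<longrightarrow>
       (word_eval G u = word_eval G v \<longleftrightarrow> word_congr Y R u v)"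
    using assms(1) unfolding finite_C_group_def by blast
  have "C_group_presentation G Y R ys"
    unfolding C_group_presentation_def C_group_presentation_axioms_def
    using G conj R assms(2) by simp
  then show thesis by (rule that)
qed

context C_group_presentation
begin

abbreviation nclasses :: nat where "nclasses \<equiv> length ys"
abbreviation Cl :: "nat \<Rightarrow> 'a set" where "Cl i \<equiv> set (ys ! i)"
abbreviation period :: "nat \<Rightarrow> nat" where "period i \<equiv> cperiod G (hd (ys ! i))"

lemma ys_nth_nonempty: "i < nclasses \<Longrightarrow> ys ! i \<noteq> []"
  and distinct_ys_nth: "i < nclasses \<Longrightarrow> distinct (ys ! i)"
  and Cl_conj_class: "i < nclasses \<Longrightarrow> Cl i = conj_class G (hd (ys ! i))"
  and Cl_disjoint: "i < nclasses \<Longrightarrow> j < nclasses \<Longrightarrow> i \<noteq> j \<Longrightarrow> Cl i \<inter> Cl j = {}"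
  and Y_eq_Union_Cl: "Y = (\<Union>i<nclasses. Cl i)"
  using class_enumeration unfolding class_enumeration_def by blast+

lemma Cl_subset_Y: "i < nclasses \<Longrightarrow> Cl i \<subseteq> Y"
  using Y_eq_Union_Cl by blast

lemma Cl_carrier: "i < nclasses \<Longrightarrow> y \<in> Cl i \<Longrightarrow> y \<in> carrier G"
  using Cl_subset_Y Y_carrier by blast

lemma hd_in_Cl: "i < nclasses \<Longrightarrow> hd (ys ! i) \<in> Cl i"
  using ys_nth_nonempty by simp

lemma Y_in_Cl:
  assumes "y \<in> Y" obtains i where "i < nclasses" "y \<in> Cl i"
  using assms Y_eq_Union_Cl by blast

lemma Cl_unique: "i < nclasses \<Longrightarrow> j < nclasses \<Longrightarrow> y \<in> Cl i \<Longrightarrow> y \<in> Cl j \<Longrightarrow> i = j"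
  using Cl_disjoint by blast

lemma conj_in_Cl:
  assumes i: "i < nclasses" and y: "y \<in> Cl i" and g: "g \<in> carrier G"
  shows "inv g \<otimes> y \<otimes> g \<in> Cl i"
proof -
  let ?h = "hd (ys ! i)"
  have h: "?h \<in> carrier G" using hd_in_Cl[OF i] Cl_carrier[OF i] by blast
  obtain g0 where g0: "g0 \<in> carrier G" "y = inv g0 \<otimes> ?h \<otimes> g0"
    using y Cl_conj_class[OF i] unfolding conj_class_def by auto
  have "inv g \<otimes> y \<otimes> g = inv (g0 \<otimes> g) \<otimes> ?h \<otimes> (g0 \<otimes> g)"
    using g0 g h by (simp add: inv_mult_group m_assoc)
  moreover have "g0 \<otimes> g \<in> carrier G" using g0(1) g by simp
  ultimately show ?thesis unfolding Cl_conj_class[OF i] conj_class_def by blast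
qed

lemma conj_in_Cl_iff:
  assumes i: "i < nclasses" and y: "y \<in> carrier G" and g: "g \<in> carrier G"
  shows "inv g \<otimes> y \<otimes> g \<in> Cl i \<longleftrightarrow> y \<in> Cl i"
proof
  assume "inv g \<otimes> y \<otimes> g \<in> Cl i"
  then have "inv (inv g) \<otimes> (inv g \<otimes> y \<otimes> g) \<otimes> inv g \<in> Cl i"
    by (rule conj_in_Cl[OF i]) (simp add: g)
  then show "y \<in> Cl i" using y g by (simp add: m_assoc)
qed (rule conj_in_Cl[OF i _ g])

lemma central_if_commutes_with_Y:
  assumes x: "x \<in> carrier G" and comm: "\<And>z. z \<in> Y \<Longrightarrow> x \<otimes> z = z \<otimes> x"
  shows "central G x"
proof -
  have Y: "Y \<subseteq> centralizer G x" using comm Y_carrier unfolding centralizer_def by blast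
  have "g \<otimes> x = x \<otimes> g" if g: "g \<in> carrier G" for g
  proof -
    obtain w where w: "fst ` set w \<subseteq> Y" "word_eval G w = g" using generated_by_Y[OF g] by blast
    then have "g \<in> centralizer G x"
      using word_eval_in_subgroup[OF subgroup_centralizer[OF x], of w] Y by auto
    then show ?thesis by (simp add: centralizer_def)
  qed
  with x show ?thesis by (simp add: central_def)
qed

(* Conjugation by the powers of y permutes the finite set Y, so two powers y^a, y^b with a < b
   act alike and y^(b - a) commutes with every generator. *)
lemma exists_central_power:
  assumes y: "y \<in> Y" shows "\<exists>q\<ge>1. central G (y [^] (q::nat))"
proof -
  have yc: "y \<in> carrier G" using y Y_carrier by blast
  define conj where "conj m = restrict (\<lambda>z. inv (y [^] m) \<otimes> z \<otimes> y [^] m) Y" for m :: nat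
  have "range conj \<subseteq> Y \<rightarrow>\<^sub>E Y" using yc by (auto simp: conj_def intro!: conj_in_Y)
  then have "finite (range conj)" using finite_Y by (meson finite_PiE finite_subset)
  then have "\<not> inj conj" using finite_imageD infinite_UNIV_nat by blast
  then obtain a b where ab: "a < b" "conj a = conj b"
    unfolding inj_def by (metis linorder_neqE_nat)
  define d where "d = b - a"
  have "y [^] d \<otimes> z = z \<otimes> y [^] d" if z: "z \<in> Y" for z
  proof -
    have zc: "z \<in> carrier G" using z Y_carrier by blast
    have yb: "y [^] b = y [^] d \<otimes> y [^] a" using yc ab(1) by (simp add: d_def nat_pow_mult)
    define w where "w = inv (y [^] d) \<otimes> z \<otimes> y [^] d"
    have wc: "w \<in> carrier G" using yc zc by (simp add: w_def)
    have conj_eq: "inv (y [^] a) \<otimes> z \<otimes> y [^] a = inv (y [^] a) \<otimes> w \<otimes> y [^] a"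
      using fun_cong[OF ab(2), of z] z yc zc by (simp add: conj_def w_def yb inv_mult_group m_assoc)
    have "z = y [^] a \<otimes> (inv (y [^] a) \<otimes> z \<otimes> y [^] a) \<otimes> inv (y [^] a)"
      using yc zc by (simp add: m_assoc)
    also have "\<dots> = w" using yc wc by (simp add: conj_eq m_assoc)
    finally have "y [^] d \<otimes> z = y [^] d \<otimes> w" by simp
    also have "\<dots> = z \<otimes> y [^] d" using yc zc by (simp add: w_def m_assoc)
    finally show ?thesis .
  qed
  then have "central G (y [^] d)" using yc by (intro central_if_commutes_with_Y) auto
  moreover have "d \<ge> 1" using ab(1) by (simp add: d_def)
  ultimately show ?thesis by blast
qed

definition class_power :: "nat \<Rightarrow> 'a" where
  "class_power i = hd (ys ! i) [^] period i"

lemma period_pos: "i < nclasses \<Longrightarrow> 1 \<le> period i"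
  and central_class_power: "i < nclasses \<Longrightarrow> central G (class_power i)"
proof -
  assume i: "i < nclasses"
  then have "hd (ys ! i) \<in> Y" using hd_in_Cl Cl_subset_Y by blast
  then have "1 \<le> period i \<and> central G (hd (ys ! i) [^] period i)"
    unfolding cperiod_def by (rule LeastI_ex[OF exists_central_power])
  then show "1 \<le> period i" "central G (class_power i)" by (simp_all add: class_power_def)
qed

lemma class_power_carrier: "i < nclasses \<Longrightarrow> class_power i \<in> carrier G"
  by (rule central_carrier[OF central_class_power])

lemma pow_period_eq_class_power:
  assumes i: "i < nclasses" and y: "y \<in> Cl i"
  shows "y [^] period i = class_power i"
proof -
  let ?h = "hd (ys ! i)"
  have h: "?h \<in> carrier G" using hd_in_Cl[OF i] Cl_carrier[OF i] by blast
  obtain g where g: "g \<in> carrier G" "y = inv g \<otimes> ?h \<otimes> g"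
    using y Cl_conj_class[OF i] unfolding conj_class_def by auto
  have "y [^] period i = inv g \<otimes> class_power i \<otimes> g"
    using g h by (simp add: conj_nat_pow class_power_def)
  also have "\<dots> = class_power i"
    using g(1) class_power_carrier[OF i]
    by (simp add: m_assoc flip: central_comm[OF central_class_power[OF i] g(1)])
  finally show ?thesis .
qed

lemma word_carrier: "fst ` set w \<subseteq> Y \<Longrightarrow> fst ` set w \<subseteq> carrier G"
  using Y_carrier by blast

lemma relation_conj:
  assumes r: "(y, z, y') \<in> R" shows "y' = inv z \<otimes> y \<otimes> z"
proof -
  have Y: "y \<in> Y" "z \<in> Y" "y' \<in> Y" using r relations_in_Y by auto
  have "word_congr Y R ([] @ [(z, False), (y, True), (z, True)] @ []) ([] @ [(y', True)] @ [])"
    by (rule wc_rel[OF r])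
  then have "word_eval G [(z, False), (y, True), (z, True)] = word_eval G [(y', True)]"
    using presentation[of "[(z, False), (y, True), (z, True)]" "[(y', True)]"] Y by simp
  moreover have "y \<in> carrier G" "z \<in> carrier G" "y' \<in> carrier G" using Y Y_carrier by auto
  ultimately show ?thesis by (simp add: letter_val_def m_assoc)
qed

lemma word_congr_degree:
  "word_congr Y R u v \<Longrightarrow> i < nclasses \<Longrightarrow> word_degree (Cl i) u = word_degree (Cl i) v"
proof (induct rule: word_congr.induct)
  case (wc_rel y z y' u v)
  have "y \<in> carrier G" "z \<in> carrier G" using wc_rel(1) relations_in_Y Y_carrier by auto
  then have "y' \<in> Cl i \<longleftrightarrow> y \<in> Cl i"
    using relation_conj[OF wc_rel(1)] conj_in_Cl_iff[OF wc_rel(2)] by simp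
  then show ?case by simp
qed auto

definition balanced_words :: "('a \<times> bool) list set" where
  "balanced_words = {w. fst ` set w \<subseteq> Y \<and> (\<forall>i<nclasses. word_degree (Cl i) w = 0)}"

lemma balanced_if_eval_balanced:
  assumes "v \<in> balanced_words" "fst ` set w \<subseteq> Y" "word_eval G w = word_eval G v"
  shows "w \<in> balanced_words"
proof -
  have v: "fst ` set v \<subseteq> Y" "\<forall>i<nclasses. word_degree (Cl i) v = 0"
    using assms(1) by (auto simp: balanced_words_def)
  have "word_congr Y R w v" using presentation[OF assms(2) v(1)] assms(3) by simp
  then show ?thesis using v word_congr_degree assms(2) by (simp add: balanced_words_def)
qed

lemma subgroup_balanced: "subgroup (word_eval G ` balanced_words) G"
proof (rule subgroupI)
  show "word_eval G ` balanced_words \<subseteq> carrier G"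
    by (auto simp: balanced_words_def intro!: word_eval_closed dest!: word_carrier)
  have "[] \<in> balanced_words" by (simp add: balanced_words_def)
  then show "word_eval G ` balanced_words \<noteq> {}" by blast
next
  fix g h assume "g \<in> word_eval G ` balanced_words" "h \<in> word_eval G ` balanced_words"
  then obtain u v where u: "u \<in> balanced_words" "g = word_eval G u"
    and v: "v \<in> balanced_words" "h = word_eval G v" by blast
  then have uv: "fst ` set u \<subseteq> carrier G" "fst ` set v \<subseteq> carrier G"
    using word_carrier unfolding balanced_words_def by blast+
  have "word_inv u \<in> balanced_words" "u @ v \<in> balanced_words"
    using u(1) v(1) by (auto simp: balanced_words_def)
  moreover have "inv g = word_eval G (word_inv u)" "g \<otimes> h = word_eval G (u @ v)"
    using u(2) v(2) uv by (simp_all add: word_eval_word_inv word_eval_append)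
  ultimately show "inv g \<in> word_eval G ` balanced_words" "g \<otimes> h \<in> word_eval G ` balanced_words"
    by simp_all
qed

lemma derived_subset_balanced: "derived G (carrier G) \<subseteq> word_eval G ` balanced_words"
  unfolding derived_def
proof (rule generate_subgroup_incl[OF _ subgroup_balanced], clarify)
  fix x y assume x: "x \<in> carrier G" and y: "y \<in> carrier G"
  obtain u where u: "fst ` set u \<subseteq> Y" "word_eval G u = x" using generated_by_Y[OF x] by blast
  obtain v where v: "fst ` set v \<subseteq> Y" "word_eval G v = y" using generated_by_Y[OF y] by blast
  let ?w = "u @ v @ word_inv u @ word_inv v"
  have "?w \<in> balanced_words" using u v by (simp add: balanced_words_def image_Un)
  moreover have "word_eval G ?w = x \<otimes> y \<otimes> inv x \<otimes> inv y"
    using u v word_carrier[OF u(1)] word_carrier[OF v(1)] x y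
    by (simp add: word_eval_append word_eval_word_inv m_assoc image_Un)
  ultimately show "x \<otimes> y \<otimes> inv x \<otimes> inv y \<in> word_eval G ` balanced_words"
    by (metis image_eqI)
qed

lemma derived_degree_zero:
  assumes g: "g \<in> derived G (carrier G)" and w: "fst ` set w \<subseteq> Y" "word_eval G w = g"
    and i: "i < nclasses"
  shows "word_degree (Cl i) w = 0"
proof -
  obtain v where "v \<in> balanced_words" "word_eval G w = word_eval G v"
    using derived_subset_balanced g w(2) by auto
  then have "w \<in> balanced_words" using w(1) balanced_if_eval_balanced by blast
  then show ?thesis using i by (simp add: balanced_words_def)
qed

definition class_power_prod :: "(nat \<Rightarrow> int) \<Rightarrow> 'a" where
  "class_power_prod e = gprod G (map (\<lambda>i. class_power i [^] e i) [0..<nclasses])"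

lemma central_class_power_prod: "central G (class_power_prod e)"
  unfolding class_power_prod_def by (auto intro!: central_gprod central_int_pow central_class_power)

lemma class_power_prod_carrier: "class_power_prod e \<in> carrier G"
  by (rule central_carrier[OF central_class_power_prod])

lemma class_power_prod_add:
  "class_power_prod (\<lambda>i. e i + f i) = class_power_prod e \<otimes> class_power_prod f"
proof -
  have "map (\<lambda>i. class_power i [^] (e i + f i)) [0..<nclasses] =
        map (\<lambda>i. class_power i [^] e i \<otimes> class_power i [^] f i) [0..<nclasses]"
    by (auto simp: int_pow_mult class_power_carrier)
  then show ?thesis
    unfolding class_power_prod_def
    by (simp only:)
      (rule gprod_map_mult_central,
        auto intro!: central_int_pow central_class_power class_power_carrier)
qed

lemma class_power_prod_zero: "class_power_prod (\<lambda>_. 0) = \<one>"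
  using class_power_prod_add[of "\<lambda>_. 0" "\<lambda>_. 0"] class_power_prod_carrier by simp

lemma inv_class_power_prod: "inv (class_power_prod e) = class_power_prod (\<lambda>i. - e i)"
  using class_power_prod_add[of "\<lambda>i. - e i" e] class_power_prod_carrier
  by (simp add: class_power_prod_zero inv_equality)

lemma class_power_prod_update:
  assumes i: "i < nclasses"
  shows "class_power_prod (e(i := e i + d)) = class_power i [^] d \<otimes> class_power_prod e"
proof -
  have "(\<lambda>j. class_power j [^] (e(i := e i + d)) j) =
        (\<lambda>j. class_power j [^] e j)(i := class_power i [^] d \<otimes> class_power i [^] e i)"
    using class_power_carrier[OF i] by (auto simp: int_pow_mult add.commute)
  then show ?thesis
    unfolding class_power_prod_def using i
    by (simp only:) (rule gprod_map_update_central,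
        auto intro!: central_int_pow central_class_power class_power_carrier)
qed

lemma inv_eq_pow_mult_class_power:
  assumes i: "i < nclasses" and y: "y \<in> Cl i"
  shows "inv y = y [^] (period i - 1) \<otimes> inv (class_power i)"
proof -
  have yc: "y \<in> carrier G" using Cl_carrier[OF i y] .
  have "inv y = y [^] (- 1 :: int)" using yc by (simp add: int_pow_neg)
  also have "\<dots> = y [^] (int (period i - 1) - int (period i))"
    using period_pos[OF i] by (simp add: of_nat_diff)
  also have "\<dots> = y [^] (period i - 1) \<otimes> inv (class_power i)"
    using yc pow_period_eq_class_power[OF i y] by (simp add: int_pow_diff int_pow_int)
  finally show ?thesis .
qed

lemma inv_letter_absorb:
  assumes i: "i < nclasses" and y: "y \<in> Cl i" and P: "set P \<subseteq> Y"
  shows "inv y \<otimes> (gprod G P \<otimes> class_power_prod e) =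
         gprod G (replicate (period i - 1) y @ P) \<otimes> class_power_prod (e(i := e i - 1))"
proof -
  have yc: "y \<in> carrier G" using Cl_carrier[OF i y] .
  have Pc: "gprod G P \<in> carrier G" using P Y_carrier by (intro gprod_closed) auto
  have zc: "inv (class_power i) \<in> carrier G" using class_power_carrier[OF i] by simp
  have comm: "inv (class_power i) \<otimes> (gprod G P \<otimes> class_power_prod e) =
              gprod G P \<otimes> (inv (class_power i) \<otimes> class_power_prod e)"
    using central_comm[OF central_inv[OF central_class_power[OF i]] Pc] zc Pc
      class_power_prod_carrier
    by (simp flip: m_assoc)
  have "inv y \<otimes> (gprod G P \<otimes> class_power_prod e) =
        y [^] (period i - 1) \<otimes> gprod G P \<otimes> (inv (class_power i) \<otimes> class_power_prod e)"
    using inv_eq_pow_mult_class_power[OF i y] yc zc Pc class_power_prod_carrier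
    by (simp add: m_assoc comm)
  moreover have "class_power_prod (e(i := e i - 1)) = inv (class_power i) \<otimes> class_power_prod e"
    using class_power_prod_update[OF i, of e "-1"] class_power_carrier[OF i]
    by (simp add: int_pow_neg)
  moreover have "gprod G (replicate (period i - 1) y @ P) = y [^] (period i - 1) \<otimes> gprod G P"
    using yc P Y_carrier by (subst gprod_append) (auto simp: gprod_replicate)
  ultimately show ?thesis by (simp only:)
qed

lemma positive_word_form:
  assumes "fst ` set w \<subseteq> Y"
  shows "\<exists>P e. set P \<subseteq> Y \<and> word_eval G w = gprod G P \<otimes> class_power_prod e \<and>
           (\<forall>i<nclasses. int (count_in (Cl i) P) + int (period i) * e i = word_degree (Cl i) w)"
  using assms
proof (induct w)
  case Nil
  show ?case by (rule exI[of _ "[]"], rule exI[of _ "\<lambda>_. 0"]) (simp add: class_power_prod_zero)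
next
  case (Cons l w)
  obtain y b where l: "l = (y, b)" by (cases l)
  from Cons.prems l have y: "y \<in> Y" and wY: "fst ` set w \<subseteq> Y" by auto
  obtain P e where P: "set P \<subseteq> Y" "word_eval G w = gprod G P \<otimes> class_power_prod e"
      "\<forall>i<nclasses. int (count_in (Cl i) P) + int (period i) * e i = word_degree (Cl i) w"
    using Cons.hyps[OF wY] by blast
  obtain i0 where i0: "i0 < nclasses" "y \<in> Cl i0" using Y_in_Cl[OF y] .
  have yc: "y \<in> carrier G" using y Y_carrier by blast
  have Pc: "gprod G P \<in> carrier G" using P(1) Y_carrier by (intro gprod_closed) auto
  have y_Cl: "y \<in> Cl i \<longleftrightarrow> i = i0" if "i < nclasses" for i
    using Cl_unique[OF that i0(1) _ i0(2)] i0(2) by blast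
  show ?case
  proof (cases b)
    case True
    have "word_eval G (l # w) = gprod G (y # P) \<otimes> class_power_prod e"
      using l True P(2) yc Pc class_power_prod_carrier by (simp add: letter_val_def m_assoc)
    moreover have "\<forall>i<nclasses. int (count_in (Cl i) (y # P)) + int (period i) * e i =
                   word_degree (Cl i) (l # w)"
      using P(3) l True by auto
    ultimately show ?thesis using y P(1) by (intro exI[of _ "y # P"] exI[of _ e]) auto
  next
    case False
    let ?P = "replicate (period i0 - 1) y @ P" and ?e = "e(i0 := e i0 - 1)"
    have "word_eval G (l # w) = gprod G ?P \<otimes> class_power_prod ?e"
      using l False P(2) inv_letter_absorb[OF i0 P(1)] by (simp add: letter_val_def)
    moreover have "int (count_in (Cl i) ?P) + int (period i) * ?e i = word_degree (Cl i) (l # w)"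
      if i: "i < nclasses" for i
      using P(3) i l False y_Cl[OF i] period_pos[OF i0(1)]
      by (auto simp: of_nat_diff algebra_simps)
    moreover have "set ?P \<subseteq> Y" using y P(1) by auto
    ultimately show ?thesis by blast
  qed
qed

lemma distinct_concat_ys: "distinct (concat ys)"
proof (rule distinct_concat)
  show "distinct ys"
  proof (subst distinct_conv_nth, intro allI impI)
    fix i j assume "i < nclasses" "j < nclasses" "i \<noteq> j"
    then show "ys ! i \<noteq> ys ! j" using Cl_disjoint ys_nth_nonempty by fastforce
  qed
  show "distinct xs" if "xs \<in> set ys" for xs
    using that distinct_ys_nth by (auto simp: in_set_conv_nth)
  show "set xs \<inter> set zs = {}" if "xs \<in> set ys" "zs \<in> set ys" "xs \<noteq> zs" for xs zs
    using that Cl_disjoint by (auto simp: in_set_conv_nth)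
qed

lemma set_concat_ys: "set (concat ys) = Y"
proof -
  have "set ys = (\<lambda>i. ys ! i) ` {..<nclasses}" by (metis atLeast_upt map_nth set_map)
  then show ?thesis unfolding Y_eq_Union_Cl by simp
qed

definition rank :: "'a \<Rightarrow> nat" where
  "rank = the_inv_into {..<length (concat ys)} ((!) (concat ys))"

lemma inj_on_rank: "inj_on rank Y"
  and map_rank_concat_ys: "map rank (concat ys) = [0..<length (concat ys)]"
proof -
  have bij: "bij_betw ((!) (concat ys)) {..<length (concat ys)} Y"
    by (rule bij_betw_nth[OF distinct_concat_ys refl set_concat_ys[symmetric]])
  then show "inj_on rank Y" unfolding rank_def
    by (rule bij_betw_imp_inj_on[OF bij_betw_the_inv_into])
  have "rank (concat ys ! k) = k" if "k < length (concat ys)" for k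
    unfolding rank_def using bij_betw_imp_inj_on[OF bij] that by (simp add: the_inv_into_f_f)
  then show "map rank (concat ys) = [0..<length (concat ys)]"
    by (intro nth_equalityI) auto
qed

lemma gprod_swap_conj:
  assumes "set (A @ x # y # B) \<subseteq> Y"
  defines "P' \<equiv> A @ y # (inv y \<otimes> x \<otimes> y) # B"
  shows "set P' \<subseteq> Y" "gprod G P' = gprod G (A @ x # y # B)"
    "i < nclasses \<Longrightarrow> count_in (Cl i) P' = count_in (Cl i) (A @ x # y # B)"
proof -
  have x: "x \<in> Y" and y: "y \<in> Y" and AB: "set A \<subseteq> carrier G" "set B \<subseteq> carrier G"
    using assms(1) Y_carrier by auto
  have xc: "x \<in> carrier G" and yc: "y \<in> carrier G" using x y Y_carrier by auto
  show "set P' \<subseteq> Y" using assms(1) conj_in_Y[OF yc x] by (auto simp: P'_def)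
  show "gprod G P' = gprod G (A @ x # y # B)"
    using xc yc AB by (simp add: P'_def gprod_append m_assoc)
  show "count_in (Cl i) P' = count_in (Cl i) (A @ x # y # B)" if "i < nclasses"
    using conj_in_Cl_iff[OF that xc yc] by (simp add: P'_def)
qed

(* Bubble sort: replacing an inversion x y by y (y^-1 x y) keeps the product and the class counts
   and decreases the list of ranks lexicographically. *)
lemma sorted_rearrangement:
  assumes "set P \<subseteq> Y"
  shows "\<exists>P'. set P' \<subseteq> Y \<and> sorted (map rank P') \<and> gprod G P' = gprod G P \<and>
              (\<forall>i<nclasses. count_in (Cl i) P' = count_in (Cl i) P)"
  using assms
proof (induct P rule: wf_induct[OF wf_inv_image[OF wf_lex[OF wf_less_than]], of "map rank"])
  case (1 P)
  show ?case
  proof (cases "sorted (map rank P)")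
    case False
    then obtain k where k: "Suc k < length P" "rank (P ! Suc k) < rank (P ! k)"
      unfolding sorted_iff_nth_Suc by (auto simp: not_le)
    define A B where "A = take k P" and "B = drop (Suc (Suc k)) P"
    have P: "P = A @ P ! k # P ! Suc k # B"
      unfolding A_def B_def using k(1) by (metis Cons_nth_drop_Suc Suc_lessD append_take_drop_id)
    define P2 where "P2 = A @ P ! Suc k # (inv (P ! Suc k) \<otimes> P ! k \<otimes> P ! Suc k) # B"
    have "(P2, P) \<in> inv_image (lex less_than) (map rank)"
      using k(2) unfolding P2_def by (subst P) (auto simp: lex_conv intro!: exI[of _ "map rank A"])
    then obtain P' where "set P' \<subseteq> Y" "sorted (map rank P')" "gprod G P' = gprod G P2"
        "\<forall>i<nclasses. count_in (Cl i) P' = count_in (Cl i) P2"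
      using "1.hyps" gprod_swap_conj(1)[of A "P ! k" "P ! Suc k" B] "1.prems" P unfolding P2_def
      by metis
    then show ?thesis
      using gprod_swap_conj(2,3)[of A "P ! k" "P ! Suc k" B] "1.prems" P unfolding P2_def by metis
  qed (use "1.prems" in blast)
qed

definition collected :: "('a \<Rightarrow> nat) \<Rightarrow> 'a" where
  "collected c = gprod G (map (\<lambda>cl. gprod G (map (\<lambda>y. y [^] c y) cl)) ys)"

lemma gprod_sorted_eq_collected:
  assumes P: "set P \<subseteq> Y" "sorted (map rank P)"
  shows "gprod G P = collected (count_list P)"
proof -
  have Ycar: "set (concat ys) \<subseteq> carrier G" using set_concat_ys Y_carrier by simp
  have "P = concat (map (\<lambda>y. replicate (count_list P y) y) (concat ys))"
    using P inj_on_rank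
    by (intro sorted_eq_concat_replicate[OF distinct_concat_ys, where r = rank])
      (simp_all only: set_concat_ys map_rank_concat_ys sorted_upt)
  also have "gprod G \<dots> = gprod G (map (\<lambda>y. gprod G (replicate (count_list P y) y)) (concat ys))"
    using Ycar by (subst gprod_concat) (auto simp: comp_def)
  also have "\<dots> = gprod G (map (\<lambda>y. y [^] count_list P y) (concat ys))"
    using Ycar by (intro arg_cong[where f = "gprod G"] map_cong) (auto simp: gprod_replicate)
  also have "\<dots> = collected (count_list P)"
    unfolding collected_def map_concat using Ycar by (subst gprod_concat) (auto simp: comp_def)
  finally show ?thesis .
qed

lemma positive_word_collected:
  assumes "set P \<subseteq> Y"
  shows "\<exists>c. gprod G P = collected c \<and> (\<forall>i<nclasses. count_in (Cl i) P = (\<Sum>y\<leftarrow>ys ! i. c y))"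
proof -
  obtain P' where P': "set P' \<subseteq> Y" "sorted (map rank P')" "gprod G P' = gprod G P"
      "\<forall>i<nclasses. count_in (Cl i) P' = count_in (Cl i) P"
    using sorted_rearrangement[OF assms] by blast
  have "count_in (Cl i) P = (\<Sum>y\<leftarrow>ys ! i. count_list P' y)" if "i < nclasses" for i
    using P'(4) that distinct_ys_nth[OF that]
    by (simp add: count_in_eq_sum_count_list sum_list_distinct_conv_sum_set)
  then show ?thesis using gprod_sorted_eq_collected[OF P'(1,2)] P'(3) by auto
qed

definition block :: "(nat \<Rightarrow> nat \<Rightarrow> nat) \<Rightarrow> nat \<Rightarrow> 'a" where
  "block a i = gprod G (map (\<lambda>j. (ys ! i ! j) [^] a i j) [0..<length (ys ! i)])"

lemma nth_ys_carrier: "i < nclasses \<Longrightarrow> j < length (ys ! i) \<Longrightarrow> ys ! i ! j \<in> carrier G"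
  using Cl_carrier by simp

lemma block_carrier: "i < nclasses \<Longrightarrow> block a i \<in> carrier G"
  unfolding block_def by (auto intro!: gprod_closed nat_pow_closed nth_ys_carrier)

(* (c - 1) mod p + 1 is the representative of c in {1..p}; the carry (c - 1) div p counts the
   powers y^p, which are central. *)
definition reduced_exp :: "('a \<Rightarrow> nat) \<Rightarrow> nat \<Rightarrow> nat \<Rightarrow> nat" where
  "reduced_exp c i j = nat ((int (c (ys ! i ! j)) - 1) mod int (period i) + 1)"

definition carry :: "('a \<Rightarrow> nat) \<Rightarrow> nat \<Rightarrow> nat \<Rightarrow> int" where
  "carry c i j = (int (c (ys ! i ! j)) - 1) div int (period i)"

lemma reduced_exp_bounds:
  assumes "i < nclasses" shows "0 < reduced_exp c i j" "reduced_exp c i j \<le> period i"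
proof -
  have "0 \<le> (int (c (ys ! i ! j)) - 1) mod int (period i)"
    "(int (c (ys ! i ! j)) - 1) mod int (period i) < int (period i)"
    using period_pos[OF assms] by simp_all
  then show "0 < reduced_exp c i j" "reduced_exp c i j \<le> period i"
    by (simp_all add: reduced_exp_def nat_le_iff)
qed

lemma reduced_exp_carry:
  "i < nclasses \<Longrightarrow> int (c (ys ! i ! j)) = int (reduced_exp c i j) + int (period i) * carry c i j"
  using period_pos[of i] unfolding reduced_exp_def carry_def by (simp add: algebra_simps)

lemma pow_reduced_exp:
  assumes i: "i < nclasses" and j: "j < length (ys ! i)"
  shows "ys ! i ! j [^] c (ys ! i ! j) =
         ys ! i ! j [^] reduced_exp c i j \<otimes> class_power i [^] carry c i j"
proof -
  let ?y = "ys ! i ! j" and ?r = "(int (c (ys ! i ! j)) - 1) mod int (period i) + 1"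
  have y: "?y \<in> Cl i" using j by simp
  have r: "int (reduced_exp c i j) = ?r"
    using reduced_exp_bounds(1)[OF i, of c j] by (simp add: reduced_exp_def)
  have "?y [^] c ?y = ?y [^] int (c ?y)"
    by (simp add: int_pow_int)
  also have "\<dots> = ?y [^] ?r \<otimes> (?y [^] int (period i)) [^] carry c i j"
    unfolding carry_def using period_pos[OF i] by (intro int_pow_reduce Cl_carrier[OF i y]) simp
  also have "?y [^] ?r = ?y [^] reduced_exp c i j"
    by (simp only: r[symmetric] int_pow_int)
  also have "?y [^] int (period i) = class_power i"
    using pow_period_eq_class_power[OF i y] by (simp add: int_pow_int)
  finally show ?thesis .
qed

lemma class_product_reduce:
  assumes i: "i < nclasses"
  shows "gprod G (map (\<lambda>y. y [^] c y) (ys ! i)) =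
         block (reduced_exp c) i \<otimes> class_power i [^] (\<Sum>j<length (ys ! i). carry c i j)"
proof -
  have "gprod G (map (\<lambda>y. y [^] c y) (ys ! i)) =
        gprod G (map (\<lambda>j. ys ! i ! j [^] reduced_exp c i j \<otimes> class_power i [^] carry c i j)
          [0..<length (ys ! i)])"
    by (subst map_conv_upt_nth, intro arg_cong[where f = "gprod G"] map_cong refl)
      (simp add: pow_reduced_exp[OF i])
  also have "\<dots> = block (reduced_exp c) i \<otimes>
                   gprod G (map (\<lambda>j. class_power i [^] carry c i j) [0..<length (ys ! i)])"
    unfolding block_def using i
    by (intro gprod_map_mult_central[where a = "\<lambda>j. ys ! i ! j [^] reduced_exp c i j"])
      (auto intro!: nat_pow_closed nth_ys_carrier central_int_pow central_class_power)
  also have "gprod G (map (\<lambda>j. class_power i [^] carry c i j) [0..<length (ys ! i)]) =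
             class_power i [^] (\<Sum>j<length (ys ! i). carry c i j)"
    using class_power_carrier[OF i]
    by (simp add: gprod_map_int_pow sum_list_sum_nth atLeast0LessThan)
  finally show ?thesis .
qed

lemma collected_reduce:
  "collected c = gprod G (map (block (reduced_exp c)) [0..<nclasses]) \<otimes>
                 class_power_prod (\<lambda>i. \<Sum>j<length (ys ! i). carry c i j)"
proof -
  have "collected c = gprod G (map (\<lambda>i. block (reduced_exp c) i \<otimes>
          class_power i [^] (\<Sum>j<length (ys ! i). carry c i j)) [0..<nclasses])"
    unfolding collected_def
    by (subst map_conv_upt_nth[of _ ys], intro arg_cong[where f = "gprod G"] map_cong refl)
      (simp add: class_product_reduce)
  also have "\<dots> = gprod G (map (block (reduced_exp c)) [0..<nclasses]) \<otimes>
                 class_power_prod (\<lambda>i. \<Sum>j<length (ys ! i). carry c i j)"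
    unfolding class_power_prod_def
    by (intro gprod_map_mult_central[where a = "block (reduced_exp c)"])
      (auto intro!: block_carrier central_int_pow central_class_power)
  finally show ?thesis .
qed

lemma sum_reduced_exp:
  "i < nclasses \<Longrightarrow> int (\<Sum>y\<leftarrow>ys ! i. c y) =
     int (\<Sum>j<length (ys ! i). reduced_exp c i j) +
     int (period i) * (\<Sum>j<length (ys ! i). carry c i j)"
  by (simp add: sum_list_sum_nth atLeast0LessThan reduced_exp_carry sum_distrib_left sum.distrib)

(* The paper's c^-1 prod_i y_i1^(k_i p_i) y_i1^a_i1 ... y_in_i^a_in_i, with y_i1 = hd (ys ! i). *)
definition normal_form :: "(nat \<Rightarrow> nat) \<Rightarrow> (nat \<Rightarrow> nat \<Rightarrow> nat) \<Rightarrow> 'a" where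
  "normal_form k a = inv (canonical_element G ys) \<otimes>
     gprod G (map (\<lambda>i. hd (ys ! i) [^] (k i * period i) \<otimes> block a i) [0..<nclasses])"

definition normal_exponents :: "(nat \<Rightarrow> nat) \<Rightarrow> (nat \<Rightarrow> nat \<Rightarrow> nat) \<Rightarrow> bool" where
  "normal_exponents k a \<longleftrightarrow> (\<forall>i<nclasses.
     (\<Sum>j<length (ys ! i). a i j) + k i * period i = length (ys ! i) * period i \<and>
     (\<forall>j<length (ys ! i). 0 < a i j \<and> a i j \<le> period i) \<and> k i < length (ys ! i))"

lemma canonical_element_eq: "canonical_element G ys = class_power_prod (\<lambda>i. int (length (ys ! i)))"
  unfolding canonical_element_def class_power_prod_def
proof (subst map_conv_upt_nth[of _ ys], intro arg_cong[where f = "gprod G"] map_cong refl)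
  fix i assume "i \<in> set [0..<nclasses]"
  then have i: "i < nclasses" by simp
  have "map (\<lambda>y. y [^] period i) (ys ! i) = replicate (length (ys ! i)) (class_power i)"
    using pow_period_eq_class_power[OF i]
    by (simp add: map_replicate_const[symmetric] cong: map_cong)
  then show "gprod G (map (\<lambda>y. y [^] period i) (ys ! i)) = class_power i [^] int (length (ys ! i))"
    using class_power_carrier[OF i] by (simp add: gprod_replicate int_pow_int)
qed

lemma normal_form_eq:
  "normal_form k a = class_power_prod (\<lambda>i. int (k i) - int (length (ys ! i))) \<otimes>
                     gprod G (map (block a) [0..<nclasses])"
proof -
  have "hd (ys ! i) [^] (k i * period i) \<otimes> block a i = block a i \<otimes> class_power i [^] int (k i)"
    if i: "i < nclasses" for i
  proof -
    have "hd (ys ! i) [^] (k i * period i) = class_power i [^] int (k i)"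
      using hd_in_Cl[OF i] Cl_carrier[OF i]
      by (simp add: class_power_def nat_pow_pow int_pow_int mult.commute)
    then show ?thesis
      using central_comm[OF central_int_pow[OF central_class_power[OF i]] block_carrier[OF i]]
      by simp
  qed
  then have "map (\<lambda>i. hd (ys ! i) [^] (k i * period i) \<otimes> block a i) [0..<nclasses] =
             map (\<lambda>i. block a i \<otimes> class_power i [^] int (k i)) [0..<nclasses]"
    by simp
  then have "gprod G (map (\<lambda>i. hd (ys ! i) [^] (k i * period i) \<otimes> block a i) [0..<nclasses]) =
             gprod G (map (block a) [0..<nclasses]) \<otimes> class_power_prod (\<lambda>i. int (k i))"
    unfolding class_power_prod_def
    by (simp only:) (intro gprod_map_mult_central[where a = "block a"],
        auto intro!: block_carrier central_int_pow central_class_power)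
  then have "normal_form k a = class_power_prod (\<lambda>i. - int (length (ys ! i))) \<otimes>
               (gprod G (map (block a) [0..<nclasses]) \<otimes> class_power_prod (\<lambda>i. int (k i)))"
    unfolding normal_form_def canonical_element_eq inv_class_power_prod by simp
  also have "\<dots> = class_power_prod (\<lambda>i. - int (length (ys ! i))) \<otimes> class_power_prod (\<lambda>i. int (k i)) \<otimes>
               gprod G (map (block a) [0..<nclasses])"
  proof -
    have B: "gprod G (map (block a) [0..<nclasses]) \<in> carrier G"
      by (auto intro!: gprod_closed block_carrier)
    show ?thesis
      using central_comm[OF central_class_power_prod B] B class_power_prod_carrier
      by (simp add: m_assoc)
  qed
  also have "\<dots> = class_power_prod (\<lambda>i. int (k i) - int (length (ys ! i))) \<otimes>
                   gprod G (map (block a) [0..<nclasses])"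
    by (simp add: class_power_prod_add[symmetric])
  finally show ?thesis .
qed

lemma normal_exponents_from_balance:
  assumes a: "\<And>i j. i < nclasses \<Longrightarrow> j < length (ys ! i) \<Longrightarrow> 0 < a i j \<and> a i j \<le> period i"
    and balance: "\<And>i. i < nclasses \<Longrightarrow> int (\<Sum>j<length (ys ! i). a i j) + int (period i) * E i = 0"
  obtains k where "normal_exponents k a"
    "\<And>i. i < nclasses \<Longrightarrow> int (k i) - int (length (ys ! i)) = E i"
proof -
  have "\<exists>k<length (ys ! i).
          (\<Sum>j<length (ys ! i). a i j) + k * period i = length (ys ! i) * period i \<and>
          int k = int (length (ys ! i)) + E i" if i: "i < nclasses" for i
    using ys_nth_nonempty[OF i] a[OF i] balance[OF i] by (intro exponent_bounds) auto
  then obtain k where k: "\<And>i. i < nclasses \<Longrightarrow> k i < length (ys ! i) \<and>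
      (\<Sum>j<length (ys ! i). a i j) + k i * period i = length (ys ! i) * period i \<and>
      int (k i) = int (length (ys ! i)) + E i"
    by metis
  show thesis by (rule that) (use k a in \<open>auto simp: normal_exponents_def\<close>)
qed

lemma derived_normal_form:
  assumes g: "g \<in> derived G (carrier G)"
  shows "\<exists>k a. normal_exponents k a \<and> g = normal_form k a"
proof -
  have "g \<in> carrier G" using g derived_in_carrier[of "carrier G"] by auto
  then obtain w where w: "fst ` set w \<subseteq> Y" "word_eval G w = g" using generated_by_Y by blast
  obtain P e where P: "set P \<subseteq> Y" "word_eval G w = gprod G P \<otimes> class_power_prod e"
      "\<forall>i<nclasses. int (count_in (Cl i) P) + int (period i) * e i = word_degree (Cl i) w"
    using positive_word_form[OF w(1)] by blast
  obtain c where c: "gprod G P = collected c" "\<forall>i<nclasses. count_in (Cl i) P = (\<Sum>y\<leftarrow>ys ! i. c y)"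
    using positive_word_collected[OF P(1)] by blast
  define a where "a = reduced_exp c"
  define E where "E = (\<lambda>i. (\<Sum>j<length (ys ! i). carry c i j) + e i)"
  have "int (\<Sum>j<length (ys ! i). a i j) + int (period i) * E i = 0" if i: "i < nclasses" for i
  proof -
    have "int (\<Sum>y\<leftarrow>ys ! i. c y) + int (period i) * e i = 0"
      using c(2) P(3) derived_degree_zero[OF g w i] i by simp
    then show ?thesis unfolding E_def distrib_left a_def
      using sum_reduced_exp[OF i, of c] by linarith
  qed
  then obtain k where k: "normal_exponents k a"
      "\<And>i. i < nclasses \<Longrightarrow> int (k i) - int (length (ys ! i)) = E i"
    using normal_exponents_from_balance reduced_exp_bounds unfolding a_def by metis
  have B: "gprod G (map (block a) [0..<nclasses]) \<in> carrier G"
    by (auto intro!: gprod_closed block_carrier)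
  have "g = gprod G P \<otimes> class_power_prod e" using w(2) P(2) by simp
  also have "\<dots> = gprod G (map (block a) [0..<nclasses]) \<otimes> class_power_prod E"
    using c(1) B class_power_prod_carrier
    by (simp add: collected_reduce a_def E_def class_power_prod_add m_assoc)
  also have "\<dots> = class_power_prod (\<lambda>i. int (k i) - int (length (ys ! i))) \<otimes>
                   gprod G (map (block a) [0..<nclasses])"
  proof -
    have "class_power_prod E = class_power_prod (\<lambda>i. int (k i) - int (length (ys ! i)))"
      unfolding class_power_prod_def
      using k(2) by (intro arg_cong[where f = "gprod G"] map_cong refl) simp
    then show ?thesis using central_comm[OF central_class_power_prod B] by simp
  qed
  also have "\<dots> = normal_form k a" by (rule normal_form_eq[symmetric])
  finally show ?thesis using k(1) by blast
qed

lemma normal_form_restrict: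
  "normal_form (restrict k {..<nclasses})
     (restrict (\<lambda>i. restrict (a i) {..<length (ys ! i)}) {..<nclasses}) = normal_form k a"
proof -
  have blk: "block (restrict (\<lambda>i. restrict (a i) {..<length (ys ! i)}) {..<nclasses}) i = block a i"
    if "i < nclasses" for i
    unfolding block_def using that by (intro arg_cong[where f = "gprod G"] map_cong) auto
  show ?thesis
    unfolding normal_form_def
    by (intro arg_cong[where f = "\<lambda>x. inv (canonical_element G ys) \<otimes> gprod G x"] map_cong refl)
      (simp add: blk)
qed

lemma finite_derived: "finite (derived G (carrier G))"
proof (rule finite_subset)
  let ?K = "\<Pi>\<^sub>E i\<in>{..<nclasses}. {..<length (ys ! i)}"
  let ?A = "\<Pi>\<^sub>E i\<in>{..<nclasses}. \<Pi>\<^sub>E j\<in>{..<length (ys ! i)}. {..period i}"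
  show "derived G (carrier G) \<subseteq> case_prod normal_form ` (?K \<times> ?A)"
  proof
    fix g assume "g \<in> derived G (carrier G)"
    then obtain k a where ka: "normal_exponents k a" "g = normal_form k a"
      using derived_normal_form by blast
    let ?k = "restrict k {..<nclasses}"
    let ?a = "restrict (\<lambda>i. restrict (a i) {..<length (ys ! i)}) {..<nclasses}"
    have "(?k, ?a) \<in> ?K \<times> ?A" using ka(1) unfolding normal_exponents_def by auto
    moreover have "g = case_prod normal_form (?k, ?a)"
      using ka(2) by (simp add: normal_form_restrict)
    ultimately show "g \<in> case_prod normal_form ` (?K \<times> ?A)" by blast
  qed
  show "finite (case_prod normal_form ` (?K \<times> ?A))"
    by (intro finite_imageI finite_cartesian_product finite_PiE) auto
qed

end

theorem proposition2p5:
  fixes G :: "('a, 'b) monoid_scheme" and Y :: "'a set" and ys :: "'a list list"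
  assumes "finite_C_group G Y"
    and "class_enumeration G Y ys"
  shows "finite (derived G (carrier G)) \<and>
    (\<forall>g \<in> derived G (carrier G). \<exists>(k :: nat \<Rightarrow> nat) (a :: nat \<Rightarrow> nat \<Rightarrow> nat).
       (\<forall>i < length ys.
          (\<Sum>j < length (ys ! i). a i j) + k i * cperiod G (hd (ys ! i))
            = length (ys ! i) * cperiod G (hd (ys ! i)) \<and>
          (\<forall>j < length (ys ! i). 0 < a i j \<and> a i j \<le> cperiod G (hd (ys ! i))) \<and>
          k i < length (ys ! i)) \<and>
       g = inv\<^bsub>G\<^esub> (canonical_element G ys) \<otimes>\<^bsub>G\<^esub>
           gprod G (map (\<lambda>i. (hd (ys ! i)) [^]\<^bsub>G\<^esub> (k i * cperiod G (hd (ys ! i))) \<otimes>\<^bsub>G\<^esub>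
                             gprod G (map (\<lambda>j. (ys ! i ! j) [^]\<^bsub>G\<^esub> a i j) [0..<length (ys ! i)]))
                        [0..<length ys]))"
proof -
  obtain R where "C_group_presentation G Y R ys"
    using finite_C_group_presentation[OF assms] .
  then interpret C_group_presentation G Y R ys .
  show ?thesis
    using finite_derived derived_normal_form
    unfolding normal_exponents_def normal_form_def block_def by blast
qed

end
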